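(* Let $\Gamma_1$ and $\Gamma_2$ be $R$-thin digraphs with no loops, and let $b_1,b_2$ be positive integers such that $\Gamma_1[\overline{\mathrm{K}}_{b_1}]\cong\Gamma_2[\overline{\mathrm{K}}_{b_2}]$. Then $\Gamma_1\cong\Gamma_2$ and $b_1=b_2$.
   Context: A digraph is a pair $(V,A)$ with $A\subseteq V\times V$; a loop is an arc $(v,v)$. For $v\in V$, $\Gamma^+(v)=\{w:(v,w)\in A\}$ and $\Gamma^-(v)=\{u:(u,v)\in A\}$. $\Gamma$ is $R$-thick if there are distinct vertices $u,v$ with $\Gamma^+(u)=\Gamma^+(v)$ and $\Gamma^-(u)=\Gamma^-(v)$, and $R$-thin otherwise. $\overline{\mathrm{K}}_b$ has $b$ vertices and no arcs. Lexicographic product $\Gamma[\Delta]$: vertex set $V(\Gamma)\times V(\Delta)$, $(u_1,u_2)\to(v_1,v_2)$ iff $u_1\to v_1$ in $\Gamma$, or $u_1=v_1$ and $u_2\to v_2$ in $\Delta$. *)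

theory Defs
  imports Main
begin

type_synonym 'a digraph = "'a set \<times> ('a \<times> 'a) set"

definition verts :: "'a digraph \<Rightarrow> 'a set" where "verts G = fst G"
definition arcs :: "'a digraph \<Rightarrow> ('a \<times> 'a) set" where "arcs G = snd G"

definition digraph :: "'a digraph \<Rightarrow> bool" where
  "digraph G \<longleftrightarrow> arcs G \<subseteq> verts G \<times> verts G"

definition loopless :: "'a digraph \<Rightarrow> bool" where
  "loopless G \<longleftrightarrow> (\<forall>v. (v, v) \<notin> arcs G)"

definition out_nbhd :: "'a digraph \<Rightarrow> 'a \<Rightarrow> 'a set" where
  "out_nbhd G v = {w. (v, w) \<in> arcs G}"

definition in_nbhd :: "'a digraph \<Rightarrow> 'a \<Rightarrow> 'a set" where
  "in_nbhd G v = {u. (u, v) \<in> arcs G}"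

definition R_thick :: "'a digraph \<Rightarrow> bool" where
  "R_thick G \<longleftrightarrow> (\<exists>u\<in>verts G. \<exists>v\<in>verts G. u \<noteq> v \<and>
      out_nbhd G u = out_nbhd G v \<and> in_nbhd G u = in_nbhd G v)"

definition R_thin :: "'a digraph \<Rightarrow> bool" where
  "R_thin G \<longleftrightarrow> \<not> R_thick G"

definition empty_digraph :: "nat \<Rightarrow> nat digraph" where
  "empty_digraph b = ({0..<b}, {})"

definition lex_product :: "'a digraph \<Rightarrow> 'b digraph \<Rightarrow> ('a \<times> 'b) digraph" where
  "lex_product G D = (verts G \<times> verts D,
     {((u1, u2), (v1, v2)). (u1, u2) \<in> verts G \<times> verts D \<and> (v1, v2) \<in> verts G \<times> verts D \<and>
        ((u1, v1) \<in> arcs G \<or> (u1 = v1 \<and> (u2, v2) \<in> arcs D))})"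

definition digraph_iso :: "'a digraph \<Rightarrow> 'b digraph \<Rightarrow> bool" where
  "digraph_iso G H \<longleftrightarrow> (\<exists>f. bij_betw f (verts G) (verts H) \<and>
     (\<forall>u\<in>verts G. \<forall>v\<in>verts G. (u, v) \<in> arcs G \<longleftrightarrow> (f u, f v) \<in> arcs H))"

end

theory Submission
  imports Defs
begin

text \<open>Call two vertices twins if they have the same out- and in-neighbours. In
  \<open>G[K\<^sub>b]\<close> (with \<open>K\<^sub>b\<close> edgeless) two vertices are twins iff their first coordinates are
  twins in \<open>G\<close>; for R-thin \<open>G\<close> this means they lie in the same fibre \<open>{u} \<times> {0..<b}\<close>.
  Being twins is preserved by isomorphisms, so an isomorphism
  \<open>G\<^sub>1[K\<^sub>b\<^sub>1] \<cong> G\<^sub>2[K\<^sub>b\<^sub>2]\<close> maps fibres onto fibres. The induced map on fibres is an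
  isomorphism \<open>G\<^sub>1 \<cong> G\<^sub>2\<close>, and comparing the sizes of corresponding fibres gives
  \<open>b\<^sub>1 = b\<^sub>2\<close>.\<close>

definition twins :: "'a digraph \<Rightarrow> 'a \<Rightarrow> 'a \<Rightarrow> bool" where
  "twins G x y \<longleftrightarrow> (\<forall>z\<in>verts G.
     ((x, z) \<in> arcs G \<longleftrightarrow> (y, z) \<in> arcs G) \<and> ((z, x) \<in> arcs G \<longleftrightarrow> (z, y) \<in> arcs G))"

definition iso_map :: "('a \<Rightarrow> 'b) \<Rightarrow> 'a digraph \<Rightarrow> 'b digraph \<Rightarrow> bool" where
  "iso_map f G H \<longleftrightarrow> bij_betw f (verts G) (verts H) \<and>
     (\<forall>u\<in>verts G. \<forall>v\<in>verts G. (u, v) \<in> arcs G \<longleftrightarrow> (f u, f v) \<in> arcs H)"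

lemma digraph_iso_iff_iso_map: "digraph_iso G H \<longleftrightarrow> (\<exists>f. iso_map f G H)"
  by (simp add: digraph_iso_def iso_map_def)

lemma twins_refl: "twins G x x"
  by (simp add: twins_def)

lemma R_thin_twins_eq:
  assumes "digraph G" "R_thin G" "u \<in> verts G" "v \<in> verts G" "twins G u v"
  shows "u = v"
proof -
  have "out_nbhd G u = out_nbhd G v" "in_nbhd G u = in_nbhd G v"
    using assms(1,5) unfolding digraph_def twins_def out_nbhd_def in_nbhd_def by blast+
  then show ?thesis
    using assms(2-4) unfolding R_thin_def R_thick_def by blast
qed

lemma twins_iso_map:
  assumes "iso_map f G H" "x \<in> verts G" "y \<in> verts G"
  shows "twins H (f x) (f y) \<longleftrightarrow> twins G x y"
proof -
  have "verts H = f ` verts G"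
    using assms(1) by (simp add: iso_map_def bij_betw_def)
  then show ?thesis
    using assms unfolding iso_map_def twins_def by auto
qed

lemma verts_lex_empty: "verts (lex_product G (empty_digraph b)) = verts G \<times> {0..<b}"
  by (simp add: lex_product_def verts_def empty_digraph_def)

lemma fibre_lex_empty: "u \<in> verts G \<Longrightarrow>
    {y \<in> verts (lex_product G (empty_digraph b)). fst y = u} = {u} \<times> {0..<b}"
  by (auto simp: verts_lex_empty)

lemma arc_lex_empty_iff:
  assumes "x \<in> verts (lex_product G (empty_digraph b))" "y \<in> verts (lex_product G (empty_digraph b))"
  shows "(x, y) \<in> arcs (lex_product G (empty_digraph b)) \<longleftrightarrow> (fst x, fst y) \<in> arcs G"
  using assms by (auto simp: lex_product_def verts_def arcs_def empty_digraph_def)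

lemma twins_lex_empty_iff:
  assumes "x \<in> verts (lex_product G (empty_digraph b))" "y \<in> verts (lex_product G (empty_digraph b))"
  shows "twins (lex_product G (empty_digraph b)) x y \<longleftrightarrow> twins G (fst x) (fst y)"
proof
  assume twins_xy: "twins (lex_product G (empty_digraph b)) x y"
  show "twins G (fst x) (fst y)"
    unfolding twins_def
  proof
    fix w assume "w \<in> verts G"
    then have wx: "(w, snd x) \<in> verts (lex_product G (empty_digraph b))"
      using assms(1) by (auto simp: verts_lex_empty)
    have "((x, (w, snd x)) \<in> arcs (lex_product G (empty_digraph b)) \<longleftrightarrow>
            (y, (w, snd x)) \<in> arcs (lex_product G (empty_digraph b))) \<and>
          (((w, snd x), x) \<in> arcs (lex_product G (empty_digraph b)) \<longleftrightarrow>
            ((w, snd x), y) \<in> arcs (lex_product G (empty_digraph b)))"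
      using twins_xy wx unfolding twins_def by blast
    then show "((fst x, w) \<in> arcs G \<longleftrightarrow> (fst y, w) \<in> arcs G) \<and>
               ((w, fst x) \<in> arcs G \<longleftrightarrow> (w, fst y) \<in> arcs G)"
      by (simp add: arc_lex_empty_iff[OF assms(1) wx] arc_lex_empty_iff[OF assms(2) wx]
          arc_lex_empty_iff[OF wx assms(1)] arc_lex_empty_iff[OF wx assms(2)])
  qed
next
  assume twins_fst: "twins G (fst x) (fst y)"
  show "twins (lex_product G (empty_digraph b)) x y"
    unfolding twins_def
  proof
    fix z assume z: "z \<in> verts (lex_product G (empty_digraph b))"
    then have "fst z \<in> verts G"
      by (auto simp: verts_lex_empty)
    with z show "((x, z) \<in> arcs (lex_product G (empty_digraph b)) \<longleftrightarrow>
                       (y, z) \<in> arcs (lex_product G (empty_digraph b))) \<and>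
                     ((z, x) \<in> arcs (lex_product G (empty_digraph b)) \<longleftrightarrow>
                       (z, y) \<in> arcs (lex_product G (empty_digraph b)))"
      using twins_fst assms by (simp add: arc_lex_empty_iff twins_def)
  qed
qed

lemma twins_lex_empty_iff_fst_eq:
  assumes "digraph G" "R_thin G"
    and "x \<in> verts (lex_product G (empty_digraph b))" "y \<in> verts (lex_product G (empty_digraph b))"
  shows "twins (lex_product G (empty_digraph b)) x y \<longleftrightarrow> fst x = fst y"
proof -
  have "fst x \<in> verts G" "fst y \<in> verts G"
    using assms(3,4) by (auto simp: verts_lex_empty)
  then show ?thesis
    using R_thin_twins_eq[OF assms(1,2)] twins_refl[of G]
    by (auto simp: twins_lex_empty_iff[OF assms(3,4)])
qed

locale thin_lex_empty_iso =
  fixes G1 :: "'a digraph" and G2 :: "'b digraph" and b1 b2 :: nat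
    and f :: "'a \<times> nat \<Rightarrow> 'b \<times> nat"
  assumes digraph1: "digraph G1" and digraph2: "digraph G2"
    and thin1: "R_thin G1" and thin2: "R_thin G2"
    and pos1: "0 < b1" and pos2: "0 < b2"
    and iso: "iso_map f (lex_product G1 (empty_digraph b1)) (lex_product G2 (empty_digraph b2))"
begin

abbreviation "P1 \<equiv> lex_product G1 (empty_digraph b1)"
abbreviation "P2 \<equiv> lex_product G2 (empty_digraph b2)"

lemma bij: "bij_betw f (verts P1) (verts P2)"
  using iso by (simp add: iso_map_def)

lemma maps_verts: "x \<in> verts P1 \<Longrightarrow> f x \<in> verts P2"
  using bij by (meson bij_betwE)

lemma fst_eq_iff:
  assumes "x \<in> verts P1" "y \<in> verts P1"
  shows "fst (f x) = fst (f y) \<longleftrightarrow> fst x = fst y"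
  using assms maps_verts twins_iso_map[OF iso]
    twins_lex_empty_iff_fst_eq[OF digraph1 thin1] twins_lex_empty_iff_fst_eq[OF digraph2 thin2]
  by metis

lemma image_fibre:
  assumes "x \<in> verts P1"
  shows "f ` {y \<in> verts P1. fst y = fst x} = {z \<in> verts P2. fst z = fst (f x)}"
proof
  show "f ` {y \<in> verts P1. fst y = fst x} \<subseteq> {z \<in> verts P2. fst z = fst (f x)}"
  proof (rule image_subsetI)
    fix y assume "y \<in> {y \<in> verts P1. fst y = fst x}"
    then show "f y \<in> {z \<in> verts P2. fst z = fst (f x)}"
      using assms maps_verts fst_eq_iff by blast
  qed
  show "{z \<in> verts P2. fst z = fst (f x)} \<subseteq> f ` {y \<in> verts P1. fst y = fst x}"
  proof
    fix z assume z: "z \<in> {z \<in> verts P2. fst z = fst (f x)}"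
    then obtain y where "y \<in> verts P1" "z = f y"
      using bij by (metis (no_types, lifting) bij_betw_imp_surj_on imageE mem_Collect_eq)
    then show "z \<in> f ` {y \<in> verts P1. fst y = fst x}"
      using z assms fst_eq_iff by auto
  qed
qed

lemma iso_map_fst: "iso_map (\<lambda>u. fst (f (u, 0))) G1 G2"
proof -
  define g where "g = (\<lambda>u. fst (f (u, 0)))"
  have in_P1: "(u, 0) \<in> verts P1" if "u \<in> verts G1" for u
    using that pos1 by (simp add: verts_lex_empty)
  have g_in: "g u \<in> verts G2" if "u \<in> verts G1" for u
    using maps_verts[OF in_P1[OF that]] by (auto simp: g_def verts_lex_empty)
  have inj: "inj_on g (verts G1)"
    using fst_eq_iff in_P1 by (force intro: inj_onI simp: g_def)
  have surj: "verts G2 \<subseteq> g ` verts G1"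
  proof
    fix w assume "w \<in> verts G2"
    then have "(w, 0) \<in> verts P2"
      using pos2 by (simp add: verts_lex_empty)
    then obtain x where x: "x \<in> verts P1" "f x = (w, 0)"
      using bij by (metis bij_betw_imp_surj_on imageE)
    then have "fst x \<in> verts G1"
      by (auto simp: verts_lex_empty)
    moreover have "w = g (fst x)"
      using x fst_eq_iff[OF x(1) in_P1[OF \<open>fst x \<in> verts G1\<close>]] by (simp add: g_def)
    ultimately show "w \<in> g ` verts G1"
      by blast
  qed
  have arcs: "(u, v) \<in> arcs G1 \<longleftrightarrow> (g u, g v) \<in> arcs G2"
    if "u \<in> verts G1" "v \<in> verts G1" for u v
  proof -
    have "(u, v) \<in> arcs G1 \<longleftrightarrow> ((u, 0), (v, 0)) \<in> arcs P1"
      using arc_lex_empty_iff in_P1 that by fastforce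
    also have "\<dots> \<longleftrightarrow> (f (u, 0), f (v, 0)) \<in> arcs P2"
      using iso in_P1 that by (simp add: iso_map_def)
    also have "\<dots> \<longleftrightarrow> (g u, g v) \<in> arcs G2"
      using arc_lex_empty_iff[OF maps_verts[OF in_P1[OF that(1)]] maps_verts[OF in_P1[OF that(2)]]]
      by (simp add: g_def)
    finally show ?thesis .
  qed
  have "g ` verts G1 = verts G2"
    using g_in surj by blast
  with inj arcs have "iso_map g G1 G2"
    by (simp add: iso_map_def bij_betw_def)
  then show ?thesis
    by (simp add: g_def)
qed

lemma b1_eq_b2:
  assumes "u \<in> verts G1"
  shows "b1 = b2"
proof -
  have u0: "(u, 0) \<in> verts P1"
    using assms pos1 by (simp add: verts_lex_empty)
  then have v: "fst (f (u, 0)) \<in> verts G2"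
    using maps_verts by (simp add: verts_lex_empty mem_Times_iff)
  have "inj_on f {y \<in> verts P1. fst y = u}"
    using bij_betw_imp_inj_on[OF bij] by (simp add: inj_on_def)
  then have "card ({u} \<times> {0..<b1}) = card (f ` {y \<in> verts P1. fst y = u})"
    by (simp add: card_image fibre_lex_empty[OF assms])
  also have "\<dots> = card ({fst (f (u, 0))} \<times> {0..<b2})"
    using image_fibre[OF u0] by (simp add: fibre_lex_empty[OF v])
  finally show ?thesis
    by (simp add: card_cartesian_product)
qed

end

theorem lemma5p3:
  fixes G1 :: "'a digraph" and G2 :: "'b digraph" and b1 b2 :: nat
  assumes "digraph G1" and "digraph G2"
    and "R_thin G1" and "R_thin G2"
    and "loopless G1" and "loopless G2"
    and "verts G1 \<noteq> {}" and "verts G2 \<noteq> {}"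
    and "b1 > 0" and "b2 > 0"
    and "digraph_iso (lex_product G1 (empty_digraph b1)) (lex_product G2 (empty_digraph b2))"
  shows "digraph_iso G1 G2 \<and> b1 = b2"
proof -
  obtain f where "iso_map f (lex_product G1 (empty_digraph b1)) (lex_product G2 (empty_digraph b2))"
    using assms(11) by (auto simp: digraph_iso_iff_iso_map)
  then interpret thin_lex_empty_iso G1 G2 b1 b2 f
    using assms by unfold_locales
  obtain u where "u \<in> verts G1"
    using assms(7) by blast
  then show ?thesis
    using iso_map_fst b1_eq_b2 digraph_iso_iff_iso_map by blast
qed

end
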